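(* Let $x$ be a Sturmian word. For every integer $k>1$ and every position $j$ of $x$, there is a factor of $x$ starting at position $j$ that is a $k$-anti-power.
   Context: A Sturmian word is an infinite word having exactly $n+1$ distinct factors of length $n$ for every $n\in\mathbb{N}$. A factor is a contiguous subword. A $k$-anti-power is a word $w=w_1\cdots w_k$ with $|w_1|=\cdots=|w_k|\ge1$ and $w_1,\dots,w_k$ pairwise distinct. *)

theory Defs
  imports Main
begin

text \<open>Infinite words are functions nat => 'a (positions start at 0).
The factor of length n starting at position i is the list of letters x i, ..., x (i+n-1).\<close>

definition factor :: "(nat \<Rightarrow> 'a) \<Rightarrow> nat \<Rightarrow> nat \<Rightarrow> 'a list" where
  "factor x i n = map x [i..<i+n]"

definition factors_of_length :: "(nat \<Rightarrow> 'a) \<Rightarrow> nat \<Rightarrow> 'a list set" where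
  "factors_of_length x n = {factor x i n | i. True}"

text \<open>Sturmian: exactly n+1 distinct factors of length n for every n (finiteness is forced
since card of an infinite set is 0).\<close>
definition sturmian :: "(nat \<Rightarrow> 'a) \<Rightarrow> bool" where
  "sturmian x \<longleftrightarrow> (\<forall>n. finite (factors_of_length x n) \<and> card (factors_of_length x n) = n + 1)"

definition anti_power :: "nat \<Rightarrow> 'a list \<Rightarrow> bool" where
  "anti_power k w \<longleftrightarrow> (\<exists>m \<ge> 1. length w = k * m \<and>
     (\<forall>i<k. \<forall>j<k. i \<noteq> j \<longrightarrow> take m (drop (i*m) w) \<noteq> take m (drop (j*m) w)))"

end

theory Submission
  imports Defs "HOL-Analysis.Kronecker_Approximation_Theorem"
begin

text \<open>A Sturmian word is recurrent, not eventually periodic and has exactly one right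
  special factor of each length.  A Rauzy graph argument shows that it is balanced over its
  two letters, so a letter \<open>b\<close> has a frequency \<open>\<alpha>\<close> with
  \<open>\<bar>letter_count x b p n - n \<alpha>\<bar> \<le> 1\<close>; \<open>\<alpha>\<close> is irrational since otherwise the word would be
  eventually periodic.  Then \<open>g s = letter_count x b 0 s - s \<alpha>\<close> stays in an interval of
  length \<open>1\<close>, and the number of \<open>b\<close>'s in the window of length \<open>d\<close> at \<open>s\<close> is decided by the
  position of \<open>g s\<close> relative to \<open>frac (d \<alpha>)\<close>.  Choose the block length \<open>m\<close> such that
  \<open>frac (e m \<alpha>)\<close> stays away from \<open>0\<close> and \<open>1\<close> for \<open>0 < e < k\<close>; by Kronecker's theorem,
  within every stretch of length \<open>m\<close> the windows of length \<open>e m\<close> take two different counts,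
  so no two of the \<open>k\<close> consecutive blocks of length \<open>m\<close> from position \<open>j\<close> coincide.\<close>

section \<open>Factors of infinite words\<close>

lemma length_factor [simp]: "length (factor x i n) = n"
  by (simp add: factor_def)

lemma nth_factor [simp]: "t < n \<Longrightarrow> factor x i n ! t = x (i + t)"
  by (simp add: factor_def)

lemma factor_Suc_snoc: "factor x i (Suc n) = factor x i n @ [x (i + n)]"
  by (simp add: factor_def)

lemma factor_Suc_Cons: "factor x i (Suc n) = x i # factor x (Suc i) n"
  by (simp add: factor_def upt_rec)

lemma factor_eq_iff: "factor x i n = factor x j n \<longleftrightarrow> (\<forall>t<n. x (i + t) = x (j + t))"
  by (auto simp: list_eq_iff_nth_eq)

lemma take_factor: "k \<le> n \<Longrightarrow> take k (factor x i n) = factor x i k"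
  by (auto simp: list_eq_iff_nth_eq)

lemma drop_factor: "drop k (factor x i n) = factor x (i + k) (n - k)"
  by (auto simp: list_eq_iff_nth_eq add.assoc)

lemma factor_add: "factor x i (n + n') = factor x i n @ factor x (i + n) n'"
  by (auto simp: list_eq_iff_nth_eq nth_append add.assoc)

lemma factor_Suc_eq_tl: "0 < n \<Longrightarrow> factor x (Suc i) n = tl (factor x i n) @ [x (i + n)]"
proof (cases n)
  case (Suc n')
  then show ?thesis
    by (simp only: factor_Suc_Cons[of x i n'] factor_Suc_snoc[of x "Suc i" n']) simp
qed simp

lemma factor_eq_imp_factor_drop_eq:
  "factor x i (k + n) = factor x j (k + n) \<Longrightarrow> factor x (i + k) n = factor x (j + k) n"
  by (metis add_diff_cancel_left' drop_factor)

definition is_factor :: "(nat \<Rightarrow> 'a) \<Rightarrow> 'a list \<Rightarrow> bool" where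
  "is_factor x u \<longleftrightarrow> (\<exists>i. factor x i (length u) = u)"

definition right_special :: "(nat \<Rightarrow> 'a) \<Rightarrow> 'a list \<Rightarrow> bool" where
  "right_special x u \<longleftrightarrow> (\<exists>c d. c \<noteq> d \<and> is_factor x (u @ [c]) \<and> is_factor x (u @ [d]))"

lemma is_factor_factor [simp]: "is_factor x (factor x i n)"
  by (auto simp: is_factor_def)

lemma mem_factors_of_length_iff: "u \<in> factors_of_length x n \<longleftrightarrow> length u = n \<and> is_factor x u"
  by (auto simp: factors_of_length_def is_factor_def) metis

lemma factor_mem_factors_of_length [simp]: "factor x i n \<in> factors_of_length x n"
  by (simp add: mem_factors_of_length_iff)

lemma is_factor_infix:
  assumes "is_factor x (u @ v @ w)"
  shows "is_factor x v"
proof -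
  obtain i where "factor x i (length u + length v + length w) = u @ v @ w"
    using assms by (auto simp: is_factor_def add.assoc)
  then have "take (length v) (drop (length u) (factor x i (length u + length v + length w))) = v"
    by simp
  then have "factor x (i + length u) (length v) = v"
    by (simp add: drop_factor take_factor)
  then show ?thesis
    by (metis is_factor_factor)
qed

lemma is_factor_prefix: "is_factor x (u @ w) \<Longrightarrow> is_factor x u"
  using is_factor_infix[of x "[]" u w] by simp

lemma is_factor_suffix: "is_factor x (u @ w) \<Longrightarrow> is_factor x w"
  using is_factor_infix[of x u w "[]"] by simp

lemma right_special_Cons: "right_special x (c # u) \<Longrightarrow> right_special x u"
  unfolding right_special_def using is_factor_suffix[of x "[c]"] by auto

section \<open>Factor complexity and eventual periodicity\<close>

definition eventually_periodic :: "(nat \<Rightarrow> 'a) \<Rightarrow> bool" where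
  "eventually_periodic x \<longleftrightarrow> (\<exists>N P. 0 < P \<and> (\<forall>s\<ge>N. x (s + P) = x s))"

lemma factors_of_length_0: "factors_of_length x 0 = {[]}"
  by (auto simp: mem_factors_of_length_iff is_factor_def factor_def)

lemma image_take_factors_of_length_Suc:
  "take n ` factors_of_length x (Suc n) = factors_of_length x n"
proof
  show "take n ` factors_of_length x (Suc n) \<subseteq> factors_of_length x n"
    by (auto simp: factors_of_length_def take_factor)
  show "factors_of_length x n \<subseteq> take n ` factors_of_length x (Suc n)"
    by (auto simp: factors_of_length_def take_factor intro!: image_eqI[of _ _ "factor x _ (Suc n)"])
qed

lemma card_factors_of_length_le_Suc:
  "finite (factors_of_length x (Suc n)) \<Longrightarrow>
     card (factors_of_length x n) \<le> card (factors_of_length x (Suc n))"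
  by (metis card_image_le image_take_factors_of_length_Suc)

text \<open>If the complexity does not grow from \<open>n\<close> to \<open>n + 1\<close>, every factor of length \<open>n\<close> has
  a unique right extension, so the word is determined by any window of length \<open>n\<close>; by
  pigeonhole some window repeats, and the word is periodic from there on (Morse--Hedlund).\<close>

lemma unique_right_extension_if_complexity_stalls:
  assumes fin: "finite (factors_of_length x (Suc n))"
    and stall: "card (factors_of_length x (Suc n)) \<le> card (factors_of_length x n)"
    and eq: "factor x i n = factor x j n"
  shows "x (i + n) = x (j + n)"
proof -
  have "card (take n ` factors_of_length x (Suc n)) = card (factors_of_length x (Suc n))"
    using card_factors_of_length_le_Suc[OF fin] stall
    by (simp add: image_take_factors_of_length_Suc)
  then have "inj_on (take n) (factors_of_length x (Suc n))"
    using eq_card_imp_inj_on fin by blast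
  moreover have "take n (factor x i (Suc n)) = take n (factor x j (Suc n))"
    using eq by (simp add: take_factor)
  ultimately have "factor x i (Suc n) = factor x j (Suc n)"
    by (auto dest: inj_onD)
  then show ?thesis
    by (simp add: factor_Suc_snoc)
qed

lemma eventually_periodic_if_complexity_stalls:
  assumes fin: "finite (factors_of_length x (Suc n))"
    and stall: "card (factors_of_length x (Suc n)) \<le> card (factors_of_length x n)"
  shows "eventually_periodic x"
proof -
  let ?F = "factors_of_length x n"
  have "finite ?F"
    using fin by (metis finite_imageI image_take_factors_of_length_Suc)
  moreover have "(\<lambda>i. factor x i n) ` {..card ?F} \<subseteq> ?F"
    by auto
  ultimately have "\<not> inj_on (\<lambda>i. factor x i n) {..card ?F}"
    by (metis card_atMost card_image card_mono lessI not_le)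
  then obtain i j where ij: "i < j" "factor x i n = factor x j n"
    by (metis (no_types, lifting) inj_onI linorder_neqE_nat)
  have shift: "factor x (i + t) n = factor x (j + t) n" for t
  proof (induction t)
    case (Suc t)
    then have "factor x (i + t) (Suc n) = factor x (j + t) (Suc n)"
      using unique_right_extension_if_complexity_stalls[OF fin stall Suc]
      by (simp add: factor_Suc_snoc add.assoc)
    then show ?case
      by (metis factor_eq_imp_factor_drop_eq add_Suc_right plus_1_eq_Suc add.commute)
  qed (use ij in simp)
  have "x (s + (j - i)) = x s" if "s \<ge> i + n" for s
  proof -
    obtain t where "s = i + t + n"
      using \<open>s \<ge> i + n\<close> by (metis le_iff_add add.assoc add.commute)
    then show ?thesis
      using unique_right_extension_if_complexity_stalls[OF fin stall shift[of t]] ij(1)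
      by (simp add: algebra_simps)
  qed
  then show ?thesis
    unfolding eventually_periodic_def using ij(1) by (metis zero_less_diff)
qed

lemma eventually_periodic_if_complexity_le:
  assumes fin: "\<And>k. finite (factors_of_length x k)"
    and le: "card (factors_of_length x n) \<le> n"
  shows "eventually_periodic x"
proof -
  have "\<exists>k<n. card (factors_of_length x (Suc k)) \<le> card (factors_of_length x k)"
  proof (rule ccontr)
    assume "\<not> ?thesis"
    then have "k \<le> n \<Longrightarrow> k + 1 \<le> card (factors_of_length x k)" for k
      by (induction k) (auto simp: factors_of_length_0 not_le Suc_le_eq)
    then show False
      using le by fastforce
  qed
  then show ?thesis
    using eventually_periodic_if_complexity_stalls fin by blast
qed

lemma card_factors_of_length_le_if_periodic:
  assumes P: "0 < P" and per: "\<forall>s\<ge>N. x (s + P) = x s"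
  shows "finite (factors_of_length x n) \<and> card (factors_of_length x n) \<le> N + P"
proof -
  have "\<exists>i'<N + P. factor x i n = factor x i' n" for i
  proof (induction i rule: less_induct)
    case (less i)
    show ?case
    proof (cases "i < N + P")
      case False
      define i' where "i' = i - P"
      have i': "i = i' + P" "N \<le> i'"
        using False by (auto simp: i'_def)
      have "x (i' + t + P) = x (i' + t)" for t
        using per i'(2) by simp
      then have "factor x i n = factor x i' n"
        unfolding factor_eq_iff i'(1) by (metis add.commute add.left_commute)
      then show ?thesis
        using less[of i'] P i' by auto
    qed blast
  qed
  then have "factors_of_length x n \<subseteq> (\<lambda>i. factor x i n) ` {..<N + P}"
    by (force simp: factors_of_length_def)
  then show ?thesis
    by (metis card_image_le card_lessThan card_mono finite_imageI finite_lessThan finite_subset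
        order_trans)
qed

section \<open>Sturmian words\<close>

locale sturmian_word =
  fixes x :: "nat \<Rightarrow> 'a"
  assumes sturmian: "sturmian x"
begin

abbreviation F :: "nat \<Rightarrow> 'a list set" where
  "F \<equiv> factors_of_length x"

lemma finite_factors: "finite (F n)"
  and card_factors: "card (F n) = n + 1"
  using sturmian by (auto simp: sturmian_def)

lemma not_eventually_periodic: "\<not> eventually_periodic x"
proof
  assume "eventually_periodic x"
  then obtain N P where "0 < P" "\<forall>s\<ge>N. x (s + P) = x s"
    by (auto simp: eventually_periodic_def)
  then have "card (F (N + P)) \<le> N + P"
    using card_factors_of_length_le_if_periodic by blast
  then show False
    using card_factors by simp
qed

text \<open>If the prefix of length \<open>n\<close> never recurs, the shifted word has at most \<open>n\<close> factors
  of length \<open>n\<close> and is therefore eventually periodic, and so is \<open>x\<close>.\<close>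

lemma prefix_recurs: "\<exists>q\<ge>1. factor x q n = factor x 0 n"
proof (rule ccontr)
  assume no_recurrence: "\<not> ?thesis"
  define y where "y s = x (Suc s)" for s
  have factor_y: "factor y i k = factor x (Suc i) k" for i k
    by (simp add: y_def list_eq_iff_nth_eq)
  have sub: "factors_of_length y k \<subseteq> F k" for k
    by (auto simp: factors_of_length_def factor_y)
  have "factors_of_length y n \<subseteq> F n - {factor x 0 n}"
    using no_recurrence by (auto simp: factors_of_length_def factor_y)
  then have "card (factors_of_length y n) \<le> n"
    using card_factors[of n] finite_factors[of n]
    by (metis card_Diff_singleton card_mono factor_mem_factors_of_length finite_Diff
        add_diff_cancel_right')
  then have "eventually_periodic y"
    using eventually_periodic_if_complexity_le finite_subset[OF sub finite_factors] by blast
  then obtain N P where "0 < P" "\<forall>s\<ge>N. y (s + P) = y s"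
    by (auto simp: eventually_periodic_def)
  then have "eventually_periodic x"
    unfolding eventually_periodic_def y_def
    by (metis Suc_le_D Suc_le_mono add_Suc)
  then show False
    using not_eventually_periodic by blast
qed

lemma factor_recurs: "\<exists>q\<ge>N. factor x q n = factor x i n"
proof -
  have "\<exists>q\<ge>N. factor x q n' = factor x 0 n'" for n'
  proof (induction N)
    case (Suc N)
    then obtain q where q: "q \<ge> N" "factor x q n' = factor x 0 n'"
      by blast
    obtain q' where "q' \<ge> 1" "factor x q' (q + n') = factor x 0 (q + n')"
      using prefix_recurs by blast
    then show ?case
      using q factor_eq_imp_factor_drop_eq[of x q' q n' 0] by (intro exI[of _ "q' + q"]) auto
  qed blast
  then obtain q where "q \<ge> N" "factor x q (i + n) = factor x 0 (i + n)"
    by blast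
  then show ?thesis
    using factor_eq_imp_factor_drop_eq[of x q i n 0] by (intro exI[of _ "q + i"]) auto
qed

lemma is_factor_recurs: "is_factor x u \<Longrightarrow> \<exists>q\<ge>N. factor x q (length u) = u"
  unfolding is_factor_def using factor_recurs by metis

lemma binary_alphabet: "\<exists>a b. a \<noteq> b \<and> (\<forall>s. x s = a \<or> x s = b)"
proof -
  have singleton: "factor x s 1 = [x s]" for s
    by (simp add: factor_def)
  have "card (F 1) = 2"
    using card_factors[of 1] by simp
  then obtain u v where uv: "F 1 = {u, v}" "u \<noteq> v"
    by (meson card_2_iff)
  have "u \<in> F 1" "v \<in> F 1"
    using uv by auto
  then obtain i j where ij: "u = [x i]" "v = [x j]"
    unfolding factors_of_length_def by (auto simp only: singleton mem_Collect_eq)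
  then have "x i \<noteq> x j"
    using uv by auto
  have "[x s] \<in> F 1" for s
    using factor_mem_factors_of_length[of x s 1] by (simp only: singleton)
  then have "x s = x i \<or> x s = x j" for s
    using uv ij by auto
  then show ?thesis
    using \<open>x i \<noteq> x j\<close> by blast
qed

text \<open>The right special factors of length \<open>n\<close> account for the surplus
  \<open>card (F (n + 1)) - card (F n) = 1\<close> of right extensions.\<close>

lemma right_special_unique:
  assumes len: "length u = length v" and u: "is_factor x u" "right_special x u"
    and v: "is_factor x v" "right_special x v"
  shows "u = v"
proof (rule ccontr)
  assume "u \<noteq> v"
  let ?n = "length u"
  obtain c1 c2 where c: "c1 \<noteq> c2" "is_factor x (u @ [c1])" "is_factor x (u @ [c2])"
    using u by (auto simp: right_special_def)
  obtain d1 d2 where d: "d1 \<noteq> d2" "is_factor x (v @ [d1])" "is_factor x (v @ [d2])"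
    using v by (auto simp: right_special_def)
  let ?A = "F (Suc ?n) - {u @ [c2], v @ [d2]}"
  have "F ?n \<subseteq> take ?n ` ?A"
  proof
    fix z
    assume z: "z \<in> F ?n"
    then obtain i where i: "factor x i ?n = z"
      by (auto simp: factors_of_length_def)
    define c where "c = (if z = u then c1 else if z = v then d1 else x (i + ?n))"
    have "z @ [c] \<in> ?A"
      using c d \<open>u \<noteq> v\<close> len i
      by (auto simp: c_def mem_factors_of_length_iff factor_Suc_snoc[symmetric])
    moreover have "take ?n (z @ [c]) = z"
      using i by auto
    ultimately show "z \<in> take ?n ` ?A"
      by (metis image_eqI)
  qed
  then have "card (F ?n) \<le> card ?A"
    by (meson card_image_le card_mono finite_Diff finite_factors finite_imageI order_trans)
  moreover have "{u @ [c2], v @ [d2]} \<subseteq> F (Suc ?n)" "u @ [c2] \<noteq> v @ [d2]"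
    using c d len \<open>u \<noteq> v\<close> by (auto simp: mem_factors_of_length_iff)
  ultimately have "card (F ?n) \<le> card (F (Suc ?n)) - 2"
    using finite_factors by (simp add: card_Diff_subset)
  then show False
    using card_factors[of ?n] card_factors[of "Suc ?n"] by simp
qed

lemma right_special_exists: "\<exists>u. length u = n \<and> is_factor x u \<and> right_special x u"
proof (rule ccontr)
  assume none: "\<not> ?thesis"
  have "inj_on (take n) (F (Suc n))"
  proof (rule inj_onI)
    fix z1 z2
    assume "z1 \<in> F (Suc n)" "z2 \<in> F (Suc n)" and eq: "take n z1 = take n z2"
    then obtain i1 i2 where z: "z1 = factor x i1 n @ [x (i1 + n)]" "z2 = factor x i2 n @ [x (i2 + n)]"
      by (auto simp: factors_of_length_def factor_Suc_snoc)
    then have "factor x i1 n = factor x i2 n"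
      using eq by simp
    then have "\<not> right_special x (factor x i1 n)" "is_factor x (factor x i1 n @ [x (i2 + n)])"
      using none by (auto simp: factor_Suc_snoc[symmetric])
    then have "x (i1 + n) = x (i2 + n)"
      unfolding right_special_def by (metis factor_Suc_snoc is_factor_factor)
    then show "z1 = z2"
      using z \<open>factor x i1 n = factor x i2 n\<close> by simp
  qed
  then have "card (F (Suc n)) = card (F n)"
    by (metis card_image image_take_factors_of_length_Suc)
  then show False
    using card_factors by simp
qed

end

section \<open>Balance\<close>

definition letter_count :: "(nat \<Rightarrow> 'a) \<Rightarrow> 'a \<Rightarrow> nat \<Rightarrow> nat \<Rightarrow> nat" where
  "letter_count x c i n = count_list (factor x i n) c"

definition balanced :: "(nat \<Rightarrow> 'a) \<Rightarrow> 'a \<Rightarrow> bool" where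
  "balanced x c \<longleftrightarrow> (\<forall>p q n. letter_count x c p n \<le> letter_count x c q n + 1)"

lemma letter_count_0 [simp]: "letter_count x c i 0 = 0"
  by (simp add: letter_count_def factor_def)

lemma letter_count_Suc:
  "letter_count x c i (Suc n) = letter_count x c i n + (if x (i + n) = c then 1 else 0)"
  by (simp add: letter_count_def factor_Suc_snoc)

lemma letter_count_Suc_left:
  "letter_count x c i (Suc n) = (if x i = c then 1 else 0) + letter_count x c (Suc i) n"
  by (simp add: letter_count_def factor_Suc_Cons)

lemma letter_count_add:
  "letter_count x c i (n + n') = letter_count x c i n + letter_count x c (i + n) n'"
  by (simp add: letter_count_def factor_add)

lemma letter_count_le: "letter_count x c i n \<le> n"
  by (metis count_le_length length_factor letter_count_def)

lemma shortest_unbalanced_windows: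
  assumes "\<not> balanced x c"
  obtains q n p where "letter_count x c q n + 2 \<le> letter_count x c p n"
    and "\<forall>p' q' n'. n' < n \<longrightarrow> letter_count x c p' n' \<le> letter_count x c q' n' + 1"
proof -
  define violated where
    "violated n \<longleftrightarrow> (\<exists>p q. letter_count x c q n + 2 \<le> letter_count x c p n)" for n
  obtain p0 q0 n0 where "\<not> letter_count x c p0 n0 \<le> letter_count x c q0 n0 + 1"
    using assms by (auto simp: balanced_def)
  then have "violated n0"
    unfolding violated_def by (intro exI[of _ p0] exI[of _ q0]) linarith
  define n where "n = (LEAST n. violated n)"
  have "violated n"
    unfolding n_def using \<open>violated n0\<close> by (rule LeastI)
  then obtain p q where "letter_count x c q n + 2 \<le> letter_count x c p n"
    unfolding violated_def by blast
  moreover have "\<forall>p' q' n'. n' < n \<longrightarrow> letter_count x c p' n' \<le> letter_count x c q' n' + 1"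
  proof (intro allI impI)
    fix p' q' n'
    assume "n' < n"
    then have "\<not> violated n'"
      using not_less_Least[of n' violated] by (simp add: n_def)
    then have "\<not> letter_count x c q' n' + 2 \<le> letter_count x c p' n'"
      unfolding violated_def by blast
    then show "letter_count x c p' n' \<le> letter_count x c q' n' + 1"
      by linarith
  qed
  ultimately show thesis
    by (rule that)
qed

text \<open>On a shortest window length \<open>n\<close> where two counts differ by \<open>2\<close>, the difference of
  the prefix counts runs \<open>0, 1, \<dots>, 1, 2\<close>: each of its value at \<open>i\<close> and its increment from
  \<open>i\<close> to \<open>n\<close> is a difference on a shorter window.\<close>

lemma shortest_unbalanced_prefix_differences:
  assumes excess: "letter_count x c q n + 2 \<le> letter_count x c p n"
    and shorter: "\<forall>p' q' n'. n' < n \<longrightarrow> letter_count x c p' n' \<le> letter_count x c q' n' + 1"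
  shows "2 \<le> n" and "letter_count x c p n = letter_count x c q n + 2"
    and "0 < i \<Longrightarrow> i < n \<Longrightarrow> letter_count x c p i = letter_count x c q i + 1"
proof -
  define \<delta> where "\<delta> i = int (letter_count x c p i) - int (letter_count x c q i)" for i
  have \<delta>_window: "\<bar>\<delta> (i + d) - \<delta> i\<bar> \<le> 1" if "d < n" for i d
    using shorter[rule_format, OF that, of "p + i" "q + i"] shorter[rule_format, OF that, of "q + i" "p + i"]
    by (simp add: \<delta>_def letter_count_add)
  show "2 \<le> n"
    using excess letter_count_le[of x c p n] by linarith
  have "\<delta> 0 = 0" "2 \<le> \<delta> n"
    using excess by (simp_all add: \<delta>_def)
  then show "letter_count x c p n = letter_count x c q n + 2"
    using \<delta>_window[of 1 0] \<delta>_window[of "n - 1" 1] \<open>2 \<le> n\<close> by (simp add: \<delta>_def)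
  show "letter_count x c p i = letter_count x c q i + 1" if "0 < i" "i < n"
    using \<delta>_window[of i 0] \<delta>_window[of "n - i" i] that \<open>\<delta> 0 = 0\<close> \<open>2 \<le> \<delta> n\<close>
    by (simp add: \<delta>_def)
qed

lemma unbalanced_imp_factors:
  assumes ab: "a \<noteq> b" and letters: "\<forall>s. x s = a \<or> x s = b" and "\<not> balanced x b"
  shows "\<exists>w. is_factor x (b # w @ [b]) \<and> is_factor x (a # w @ [a])"
proof -
  obtain p q n where excess: "letter_count x b q n + 2 \<le> letter_count x b p n"
    and shorter: "\<forall>p' q' n'. n' < n \<longrightarrow> letter_count x b p' n' \<le> letter_count x b q' n' + 1"
    by (rule shortest_unbalanced_windows[OF \<open>\<not> balanced x b\<close>])
  note differences = shortest_unbalanced_prefix_differences[OF excess shorter]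
  obtain m where m: "n = Suc (Suc m)"
    using differences(1) by (metis add_2_eq_Suc le_Suc_ex)
  have step: "int (letter_count x b p (Suc i)) - int (letter_count x b q (Suc i))
      = int (letter_count x b p i) - int (letter_count x b q i)
        + (if x (p + i) = b then 1 else 0) - (if x (q + i) = b then 1 else 0)" for i
    by (simp add: letter_count_Suc)
  have "(if x p = b then 1 else 0) - (if x q = b then 1 else 0) = (1::int)"
    using step[of 0] differences(3)[of 1] m by simp
  then have first: "x p = b" "x q = a"
    using letters by (auto split: if_splits)
  have "(if x (p + Suc m) = b then 1 else 0) - (if x (q + Suc m) = b then 1 else 0) = (1::int)"
    using step[of "Suc m"] differences(2) differences(3)[of "Suc m"] m by simp
  then have last: "x (p + Suc m) = b" "x (q + Suc m) = a"
    using letters by (auto split: if_splits)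
  have "x (Suc p + t) = x (Suc q + t)" if "t < m" for t
  proof -
    have "(if x (Suc p + t) = b then 1 else 0) = (if x (Suc q + t) = b then 1 else (0::int))"
      using step[of "Suc t"] differences(3)[of "Suc t"] differences(3)[of "Suc (Suc t)"] that m
      by simp
    then show ?thesis
      using letters by (metis one_neq_zero)
  qed
  then have middle: "factor x (Suc p) m = factor x (Suc q) m"
    by (simp add: factor_eq_iff)
  have split: "factor x i n = x i # factor x (Suc i) m @ [x (i + Suc m)]" for i
    by (simp only: m factor_Suc_Cons[of x i] factor_Suc_snoc[of x "Suc i" m]) simp
  show ?thesis
    using split[of p] split[of q] first last middle by (metis is_factor_factor)
qed

lemma count_list_take_mono:
  assumes "i \<le> j"
  shows "count_list (take i xs) c \<le> count_list (take j xs) c"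
proof -
  have "take j xs = take i xs @ take (j - i) (drop i xs)"
    using take_add[of i "j - i" xs] assms by simp
  then show ?thesis
    by (metis count_list_append le_add1)
qed

lemma count_list_rotated_window_le:
  "count_list (drop r u @ take (r - 1) u) c \<le> count_list u c"
proof -
  have "count_list u c = count_list (drop r u) c + count_list (take r u) c"
    by (metis add.commute append_take_drop_id count_list_append)
  then show ?thesis
    using count_list_take_mono[of "r - 1" r u c] by simp
qed

text \<open>The Rauzy graph argument: if \<open>a w a\<close> and \<open>b w b\<close> are factors and \<open>a w\<close> is the right
  special factor of its length, then every window other than \<open>a w\<close> has a unique successor
  and \<open>b w\<close> is always followed by \<open>b\<close>.  The \<open>a\<close>-edge leaving \<open>a w\<close> must lead through
  \<open>b w\<close> back to \<open>a w\<close> along a cycle visiting all \<open>|w| + 2\<close> windows, so the word \<open>a w a\<close>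
  is read cyclically; but a cyclic window of length \<open>|w| + 1\<close> of \<open>a w a\<close> contains no
  more \<open>b\<close>'s than \<open>w\<close>, whereas \<open>b w\<close> contains one more.\<close>

locale sturmian_unbalanced = sturmian_word +
  fixes a b :: 'a and w :: "'a list"
  assumes ab: "a \<noteq> b" and letters: "\<forall>s. x s = a \<or> x s = b"
    and factor_awa: "is_factor x (a # w @ [a])" and factor_bwb: "is_factor x (b # w @ [b])"
    and right_special_aw: "right_special x (a # w)"
begin

abbreviation window :: "nat \<Rightarrow> 'a list" where
  "window t \<equiv> factor x t (Suc (length w))"

lemma window_Suc: "window (Suc t) = tl (window t) @ [x (t + Suc (length w))]"
  by (simp add: factor_Suc_eq_tl)

lemma is_factor_aw: "is_factor x (a # w)"
  using factor_awa is_factor_prefix[of x "a # w"] by simp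

lemma is_factor_bw: "is_factor x (b # w)"
  using factor_bwb is_factor_prefix[of x "b # w"] by simp

lemma window_recurs: "\<exists>q\<ge>N. window q = a # w"
  using is_factor_recurs[OF is_factor_aw] by simp

lemma window_bw_Suc:
  assumes "window t = b # w"
  shows "x (t + Suc (length w)) = b"
proof (rule ccontr)
  assume "x (t + Suc (length w)) \<noteq> b"
  then have "is_factor x ((b # w) @ [a])"
    using assms letters by (metis factor_Suc_snoc is_factor_factor)
  then have "right_special x (b # w)"
    using factor_bwb ab unfolding right_special_def by auto
  then have "b # w = a # w"
    using right_special_unique[of "b # w" "a # w"] right_special_aw is_factor_aw is_factor_bw
    by simp
  then show False
    using ab by simp
qed

lemma window_Suc_cong:
  assumes "window t = window t'" and "window t \<noteq> a # w"
  shows "window (Suc t) = window (Suc t')"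
proof -
  have "x (t + Suc (length w)) = x (t' + Suc (length w))"
  proof (rule ccontr)
    assume "x (t + Suc (length w)) \<noteq> x (t' + Suc (length w))"
    then have "right_special x (window t)"
      unfolding right_special_def by (metis assms(1) factor_Suc_snoc is_factor_factor)
    then show False
      using right_special_unique[of "window t" "a # w"] right_special_aw is_factor_aw assms(2)
      by simp
  qed
  then show ?thesis
    using assms(1) window_Suc by metis
qed

text \<open>A repetition of windows with no \<open>a w\<close> in between would trap the word in a cycle
  forever, contradicting the recurrence of \<open>a w\<close>.\<close>

lemma no_cycle_avoiding_aw:
  assumes "\<tau> < \<tau>'" and "window \<tau> = window \<tau>'" and avoid: "\<forall>\<sigma>\<in>{\<tau>..<\<tau>'}. window \<sigma> \<noteq> a # w"
  shows False
proof -
  have "\<exists>\<sigma>\<in>{\<tau>..<\<tau>'}. window (\<tau> + i) = window \<sigma>" for i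
  proof (induction i)
    case (Suc i)
    then obtain \<sigma> where \<sigma>: "\<sigma> \<in> {\<tau>..<\<tau>'}" "window (\<tau> + i) = window \<sigma>"
      by blast
    then have "window (\<tau> + Suc i) = window (Suc \<sigma>)"
      using window_Suc_cong avoid by (metis add_Suc_right)
    show ?case
    proof (cases "Suc \<sigma> = \<tau>'")
      case True
      then show ?thesis
        using \<open>window (\<tau> + Suc i) = window (Suc \<sigma>)\<close> assms(1,2) by (intro bexI[of _ \<tau>]) auto
    next
      case False
      then show ?thesis
        using \<open>window (\<tau> + Suc i) = window (Suc \<sigma>)\<close> \<sigma>(1) by (intro bexI[of _ "Suc \<sigma>"]) auto
    qed
  qed (use assms(1) in auto)
  moreover obtain q where "q \<ge> \<tau>" "window q = a # w"
    using window_recurs by blast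
  ultimately show False
    using avoid by (metis le_add_diff_inverse)
qed

text \<open>Take \<open>p\<close> the last occurrence of \<open>a w\<close> before an occurrence \<open>t\<close> of \<open>b w\<close>, and \<open>e\<close>
  the next one after \<open>p\<close>.  If \<open>p\<close> were followed by \<open>b\<close>, the windows at \<open>p + 1\<close> and \<open>t + 1\<close>
  would both be \<open>w b\<close>, with no \<open>a w\<close> in between.\<close>

lemma return_through_bw:
  obtains p t e where "p < t" "t < e" "window p = a # w" "window e = a # w" "window t = b # w"
    "x (p + Suc (length w)) = a" "\<forall>\<sigma>. p < \<sigma> \<and> \<sigma> < e \<longrightarrow> window \<sigma> \<noteq> a # w"
proof -
  obtain t0 where t0: "window t0 = a # w"
    using window_recurs by blast
  obtain t where t: "t \<ge> t0" "window t = b # w"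
    using is_factor_recurs[OF is_factor_bw] by auto
  define p where "p = (GREATEST \<sigma>. \<sigma> \<le> t \<and> window \<sigma> = a # w)"
  have p: "p \<le> t" "window p = a # w"
    using GreatestI_nat[of "\<lambda>\<sigma>. \<sigma> \<le> t \<and> window \<sigma> = a # w" t0 t] t t0 by (auto simp: p_def)
  have after_p: "window \<sigma> \<noteq> a # w" if "p < \<sigma>" "\<sigma> \<le> t" for \<sigma>
    using Greatest_le_nat[of "\<lambda>\<sigma>. \<sigma> \<le> t \<and> window \<sigma> = a # w" \<sigma> t] that by (auto simp: p_def)
  have "p < t"
    using p t(2) ab by (cases "p = t") auto
  have a_edge: "x (p + Suc (length w)) = a"
  proof (rule ccontr)
    assume "x (p + Suc (length w)) \<noteq> a"
    then have "x (p + Suc (length w)) = b"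
      using letters by metis
    then have "window (Suc p) = window (Suc t)"
      using window_Suc[of p] window_Suc[of t] window_bw_Suc[OF t(2)] p(2) t(2) by simp
    then show False
      using no_cycle_avoiding_aw[of "Suc p" "Suc t"] \<open>p < t\<close> after_p by auto
  qed
  define e where "e = (LEAST \<sigma>. p < \<sigma> \<and> window \<sigma> = a # w)"
  obtain q where "q \<ge> Suc p" "window q = a # w"
    using window_recurs by blast
  then have e: "p < e" "window e = a # w"
    using LeastI[of "\<lambda>\<sigma>. p < \<sigma> \<and> window \<sigma> = a # w" q] by (auto simp: e_def)
  have "window \<sigma> \<noteq> a # w" if "p < \<sigma>" "\<sigma> < e" for \<sigma>
    using not_less_Least[of \<sigma> "\<lambda>\<sigma>. p < \<sigma> \<and> window \<sigma> = a # w"] that by (auto simp: e_def)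
  moreover have "t < e"
    using after_p e by (meson not_le)
  ultimately show thesis
    using that \<open>p < t\<close> p(2) e(2) t(2) a_edge by blast
qed

lemma windows_distinct_between_returns:
  assumes "window p = a # w" and between: "\<forall>\<sigma>. p < \<sigma> \<and> \<sigma> < e \<longrightarrow> window \<sigma> \<noteq> a # w"
  shows "inj_on window {p..<e}"
proof -
  have "window \<sigma>1 \<noteq> window \<sigma>2" if "p \<le> \<sigma>1" "\<sigma>1 < \<sigma>2" "\<sigma>2 < e" for \<sigma>1 \<sigma>2
  proof (cases "\<sigma>1 = p")
    case False
    then show ?thesis
      using no_cycle_avoiding_aw[of \<sigma>1 \<sigma>2] between that by auto
  qed (use assms that in auto)
  then show ?thesis
    by (intro inj_onI) (metis atLeastLessThan_iff linorder_neqE_nat)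
qed

text \<open>Both edges leaving \<open>a w\<close> lead back into the windows between \<open>p\<close> and \<open>e\<close>, so
  the word never leaves them after \<open>p\<close>; since every factor recurs after \<open>p\<close>, they are all
  the factors.\<close>

lemma windows_between_returns_cover:
  assumes "p < t" "t < e" and A: "window p = a # w" "window e = a # w"
    and B: "window t = b # w" and a_edge: "x (p + Suc (length w)) = a"
  shows "window ` {p..<e} = F (Suc (length w))"
proof
  let ?W = "window ` {p..<e}"
  have closed: "window \<sigma> \<in> ?W" if "p \<le> \<sigma>" "\<sigma> \<le> e" for \<sigma>
    using that assms(1,2) A by (cases "\<sigma> = e") (auto intro: rev_image_eqI[of p])
  have reached: "window (p + i) \<in> ?W" for i
  proof (induction i)
    case (Suc i)
    then obtain \<sigma> where \<sigma>: "\<sigma> \<in> {p..<e}" "window (p + i) = window \<sigma>"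
      by blast
    show ?case
    proof (cases "window \<sigma> = a # w")
      case False
      then show ?thesis
        using window_Suc_cong[OF \<sigma>(2)[symmetric]] closed[of "Suc \<sigma>"] \<sigma>(1) by simp
    next
      case True
      then have "window (p + Suc i) = window (Suc p) \<or> window (p + Suc i) = window (Suc t)"
        using window_Suc[of "p + i"] window_Suc[of p] window_Suc[of t] window_bw_Suc[OF B]
          a_edge A(1) B \<sigma>(2) letters
        by (metis add_Suc_right list.sel(3))
      then show ?thesis
        using closed[of "Suc p"] closed[of "Suc t"] assms(1,2) by auto
    qed
  qed (use closed[of p] assms(1,2) in simp)
  show "F (Suc (length w)) \<subseteq> ?W"
  proof
    fix v
    assume "v \<in> F (Suc (length w))"
    then obtain i where "window i = v"
      by (auto simp: factors_of_length_def)
    then obtain q where "q \<ge> p" "window q = v"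
      using factor_recurs by metis
    then show "v \<in> ?W"
      using reached by (metis le_add_diff_inverse)
  qed
qed auto

lemma return_through_bw_in_length_plus_2:
  obtains p t where "p < t" "t < p + Suc (Suc (length w))" "window p = a # w"
    "window (p + Suc (Suc (length w))) = a # w" "window t = b # w" "x (p + Suc (length w)) = a"
proof -
  obtain p t e where pte: "p < t" "t < e" "window p = a # w" "window e = a # w" "window t = b # w"
    and a_edge: "x (p + Suc (length w)) = a"
    and between: "\<forall>\<sigma>. p < \<sigma> \<and> \<sigma> < e \<longrightarrow> window \<sigma> \<noteq> a # w"
    using return_through_bw by blast
  have "card (window ` {p..<e}) = e - p"
    using windows_distinct_between_returns[OF pte(3) between] by (simp add: card_image)
  then have "e = p + Suc (Suc (length w))"
    using windows_between_returns_cover[OF pte a_edge] card_factors pte(1,2) by simp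
  then show thesis
    using that pte a_edge by blast
qed

lemma inconsistent: False
proof -
  obtain p t where pt: "p < t" "t < p + Suc (Suc (length w))" "window p = a # w"
    "window (p + Suc (Suc (length w))) = a # w" "window t = b # w"
    and a_edge: "x (p + Suc (length w)) = a"
    using return_through_bw_in_length_plus_2 by blast
  define u where "u = (a # w) @ [a]"
  have length_u: "length u = Suc (Suc (length w))"
    by (simp add: u_def)
  define r where "r = t - p"
  have r: "0 < r" "r \<le> length u" "t = p + r"
    using pt(1,2) length_u by (auto simp: r_def)
  have "factor x p (length u) = u"
    using pt(3) a_edge by (simp add: factor_Suc_snoc u_def)
  then have "factor x p (length u + Suc (length w)) = u @ a # w"
    using factor_add[of x p "length u" "Suc (length w)"] pt(4) length_u by simp
  moreover have "window t = take (Suc (length w)) (drop r (factor x p (length u + Suc (length w))))"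
    using r by (simp add: drop_factor take_factor)
  ultimately have "b # w = take (Suc (length w)) (drop r (u @ a # w))"
    using pt(5) by simp
  also have "\<dots> = drop r u @ take (r - 1) (a # w)"
    using r(1,2) length_u by simp
  also have "take (r - 1) (a # w) = take (r - 1) u"
    using r(2) length_u unfolding u_def take_append by simp
  finally have "count_list (b # w) b \<le> count_list u b"
    using count_list_rotated_window_le by metis
  then show False
    using ab by (simp add: u_def)
qed

end

context sturmian_word
begin

text \<open>The right special factor of length \<open>|w| + 1\<close> is \<open>c w\<close> for a letter \<open>c\<close>, as its
  suffix of length \<open>|w|\<close> is right special; the Rauzy graph argument applies with \<open>c\<close> in the
  role of \<open>a\<close>.\<close>

lemma balanced_letter:
  assumes ab: "a \<noteq> b" and letters: "\<forall>s. x s = a \<or> x s = b"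
  shows "balanced x b"
proof (rule ccontr)
  assume "\<not> balanced x b"
  then obtain w where bwb: "is_factor x (b # w @ [b])" and awa: "is_factor x (a # w @ [a])"
    using unbalanced_imp_factors[OF ab letters] by blast
  obtain u where u: "length u = Suc (length w)" "is_factor x u" "right_special x u"
    using right_special_exists by blast
  then obtain c v where c: "u = c # v"
    by (cases u) auto
  have wa: "is_factor x (w @ [a])" and "is_factor x (w @ [b])"
    using is_factor_suffix[of x "[a]" "w @ [a]"] is_factor_suffix[of x "[b]" "w @ [b]"] awa bwb
    by simp_all
  then have "right_special x w"
    using ab unfolding right_special_def by blast
  moreover have "is_factor x w"
    using wa by (rule is_factor_prefix)
  moreover have "right_special x v" "is_factor x v"
    using u(2,3) c right_special_Cons[of x c v] is_factor_suffix[of x "[c]" v] by simp_all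
  ultimately have "v = w"
    using right_special_unique u(1) c by simp
  then have cw: "right_special x (c # w)"
    using u(3) c by simp
  obtain s where "x s = c"
    using u(2) c by (auto simp: is_factor_def factor_Suc_Cons)
  then consider "c = a" | "c = b"
    using letters by metis
  then show False
  proof cases
    case 1
    have "sturmian_unbalanced x a b w"
      by (intro sturmian_unbalanced.intro sturmian_unbalanced_axioms.intro sturmian_word_axioms)
        (use ab letters awa bwb cw 1 in auto)
    then show False
      by (rule sturmian_unbalanced.inconsistent)
  next
    case 2
    have "sturmian_unbalanced x b a w"
      by (intro sturmian_unbalanced.intro sturmian_unbalanced_axioms.intro sturmian_word_axioms)
        (use ab letters awa bwb cw 2 in auto)
    then show False
      by (rule sturmian_unbalanced.inconsistent)
  qed
qed

end

section \<open>Letter frequencies of balanced words\<close>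

lemma letter_count_blocks: "letter_count x c s (k * n) = (\<Sum>i<k. letter_count x c (s + i * n) n)"
proof (induction k)
  case (Suc k)
  have "letter_count x c s (Suc k * n) = letter_count x c s (k * n) + letter_count x c (s + k * n) n"
    by (metis add.commute letter_count_add mult_Suc)
  then show ?case
    using Suc by simp
qed simp

context
  fixes x :: "nat \<Rightarrow> 'a" and c :: 'a
  assumes bal: "balanced x c"
begin

text \<open>Cutting a window of length \<open>n * n'\<close> once into \<open>n\<close> blocks of length \<open>n'\<close> and once into
  \<open>n'\<close> blocks of length \<open>n\<close> compares the densities of any two windows.\<close>

lemma balanced_density_cross_bound:
  "n * letter_count x c q n' \<le> n' * letter_count x c p n + n + n'"
proof -
  have "n * letter_count x c q n' \<le> (\<Sum>i<n. letter_count x c (0 + i * n') n' + 1)"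
    using bal sum_mono[of "{..<n}" "\<lambda>_. letter_count x c q n'"] by (simp add: balanced_def)
  also have "\<dots> = letter_count x c 0 (n * n') + n"
    by (simp only: sum.distrib letter_count_blocks) simp
  also have "letter_count x c 0 (n * n') \<le> (\<Sum>i<n'. letter_count x c p n + 1)"
    unfolding mult.commute[of n] letter_count_blocks using bal
    by (intro sum_mono) (simp add: balanced_def)
  finally show ?thesis
    by simp
qed

text \<open>\<open>\<alpha>\<close> is the supremum of the lower estimates \<open>(letter_count x c p n - 1) / n\<close>, which by
  the cross bound lie below all upper estimates \<open>(letter_count x c p n + 1) / n\<close>.\<close>

lemma balanced_frequency: "\<exists>\<alpha>. \<forall>p n. \<bar>real (letter_count x c p n) - real n * \<alpha>\<bar> \<le> 1"
proof -
  let ?S = "{(real (letter_count x c p n) - 1) / real n | p n. 1 \<le> n}"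
  have upper: "(real (letter_count x c q n') - 1) / real n' \<le> (real (letter_count x c p n) + 1) / real n"
    if "1 \<le> n" "1 \<le> n'" for p q n n'
  proof -
    have "real n * real (letter_count x c q n') \<le> real n' * real (letter_count x c p n) + real n + real n'"
      using balanced_density_cross_bound[of n q n' p] by (metis of_nat_add of_nat_le_iff of_nat_mult)
    then show ?thesis
      using that by (simp add: divide_simps algebra_simps)
  qed
  define \<alpha> where "\<alpha> = Sup ?S"
  have bdd: "bdd_above ?S"
    using upper[where p = 0 and n = 1] by (intro bdd_aboveI[of _ "real (letter_count x c 0 1) + 1"]) auto
  have bounds: "real (letter_count x c p n) - 1 \<le> real n * \<alpha>"
    "real n * \<alpha> \<le> real (letter_count x c p n) + 1" if "1 \<le> n" for p n
  proof -
    have "(real (letter_count x c p n) - 1) / real n \<le> \<alpha>"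
      unfolding \<alpha>_def using that by (intro cSup_upper[OF _ bdd]) auto
    moreover have "\<alpha> \<le> (real (letter_count x c p n) + 1) / real n"
      unfolding \<alpha>_def using upper that by (intro cSup_least) auto
    ultimately show "real (letter_count x c p n) - 1 \<le> real n * \<alpha>"
      "real n * \<alpha> \<le> real (letter_count x c p n) + 1"
      using that by (simp_all add: field_simps)
  qed
  have "\<bar>real (letter_count x c p n) - real n * \<alpha>\<bar> \<le> 1" for p n
    using bounds[where p = p and n = n] by (cases "n = 0") (auto simp: abs_le_iff)
  then show ?thesis
    by blast
qed

end

lemma letter_count_Suc_shift:
  "letter_count x c (Suc s) n + (if x s = c then 1 else 0)
     = letter_count x c s n + (if x (s + n) = c then 1 else 0)"
  using letter_count_Suc_left[of x c s n] letter_count_Suc[of x c s n] by linarith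

lemma eventually_periodic_if_letter_count_stable:
  assumes letters: "\<forall>s. x s = a \<or> x s = b" and "0 < Q"
    and stable: "\<forall>s\<ge>N. letter_count x b s Q = letter_count x b (Suc s) Q"
  shows "eventually_periodic x"
proof -
  have "x (s + Q) = x s" if "s \<ge> N" for s
  proof -
    have "(if x s = b then 1 else 0) = (if x (s + Q) = b then 1 else (0::nat))"
      using letter_count_Suc_shift[of x b s Q] stable[rule_format, OF that] by linarith
    then show ?thesis
      using letters by (metis one_neq_zero)
  qed
  then show ?thesis
    using \<open>0 < Q\<close> by (auto simp: eventually_periodic_def)
qed

lemma finite_support_if_progression_sums_le_1:
  fixes D :: "nat \<Rightarrow> int"
  assumes "0 < Q" and progression: "\<And>s k. (\<Sum>i<k. \<bar>D (s + i * Q)\<bar>) \<le> 1"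
  shows "finite {s. D s \<noteq> 0}"
proof -
  have one_per_class: "D s' = 0" if "D s \<noteq> 0" "s < s'" "s mod Q = s' mod Q" for s s'
  proof (rule ccontr)
    assume "D s' \<noteq> 0"
    have "Q dvd s' - s"
      using that(2,3) mod_eq_dvd_iff_nat[of s s' Q] by simp
    then obtain t where "s' - s = t * Q"
      by (metis dvd_def mult.commute)
    then have t: "s' = s + t * Q" "1 \<le> t"
      using that(2) by (linarith, cases t) auto
    have "(\<Sum>i\<in>{0, t}. \<bar>D (s + i * Q)\<bar>) \<le> (\<Sum>i<Suc t. \<bar>D (s + i * Q)\<bar>)"
      by (intro sum_mono2) auto
    moreover have "(\<Sum>i\<in>{0, t}. \<bar>D (s + i * Q)\<bar>) = \<bar>D s\<bar> + \<bar>D s'\<bar>"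
      using t by simp
    ultimately show False
      using progression[of s "Suc t"] \<open>D s \<noteq> 0\<close> \<open>D s' \<noteq> 0\<close> by simp
  qed
  have "inj_on (\<lambda>s. s mod Q) {s. D s \<noteq> 0}"
  proof (rule inj_onI)
    fix s s'
    assume "s \<in> {s. D s \<noteq> 0}" "s' \<in> {s. D s \<noteq> 0}" "s mod Q = s' mod Q"
    then show "s = s'"
      using one_per_class[of s s'] one_per_class[of s' s] by (cases s s' rule: linorder_cases) auto
  qed
  then show ?thesis
    by (rule inj_on_finite[where B = "{..<Q}"]) (use \<open>0 < Q\<close> in auto)
qed

text \<open>With \<open>\<alpha> = P / Q\<close>, the deviations of the counts in windows of length \<open>Q\<close> from \<open>P\<close>
  lie in \<open>{-1, 0, 1}\<close>, all have the same sign by balance, and sum to at most \<open>1\<close> in absolute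
  value along every progression \<open>s, s + Q, s + 2 Q, \<dots>\<close>.  So only finitely many are nonzero,
  and eventually all windows of length \<open>Q\<close> have the same count.\<close>

context
  fixes x :: "nat \<Rightarrow> 'a" and b :: 'a and \<alpha> :: real and P :: int and Q :: nat
  assumes bal: "balanced x b"
    and freq: "\<forall>p n. \<bar>real (letter_count x b p n) - real n * \<alpha>\<bar> \<le> 1"
    and rational: "real Q * \<alpha> = of_int P"
begin

lemma window_count_deviation_le_1: "\<bar>int (letter_count x b s Q) - P\<bar> \<le> 1"
proof -
  have "\<bar>real (letter_count x b s Q) - of_int P\<bar> \<le> 1"
    using freq rational by metis
  then have "\<bar>real_of_int (int (letter_count x b s Q) - P)\<bar> \<le> 1"
    by simp
  then show ?thesis
    by linarith
qed

lemma window_count_deviations_same_sign: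
  "(\<forall>s. P \<le> int (letter_count x b s Q)) \<or> (\<forall>s. int (letter_count x b s Q) \<le> P)"
proof (rule ccontr)
  assume "\<not> ?thesis"
  then obtain s s' where "int (letter_count x b s Q) < P" "P < int (letter_count x b s' Q)"
    by (meson not_le)
  then have "letter_count x b s Q + 1 < letter_count x b s' Q"
    using window_count_deviation_le_1[of s] window_count_deviation_le_1[of s'] by linarith
  then show False
    using bal unfolding balanced_def by (metis not_le)
qed

lemma window_count_deviations_along_progression:
  "(\<Sum>i<k. \<bar>int (letter_count x b (s + i * Q) Q) - P\<bar>) \<le> 1"
proof -
  let ?D = "\<lambda>s. int (letter_count x b s Q) - P"
  have "(\<Sum>i<k. ?D (s + i * Q)) = int (letter_count x b s (k * Q)) - int k * P"
    by (simp add: letter_count_blocks sum_subtractf)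
  moreover have "\<bar>real (letter_count x b s (k * Q)) - real k * of_int P\<bar> \<le> 1"
    using freq rational by (metis mult.assoc of_nat_mult)
  ultimately have "\<bar>real_of_int (\<Sum>i<k. ?D (s + i * Q))\<bar> \<le> 1"
    by simp
  then have "\<bar>\<Sum>i<k. ?D (s + i * Q)\<bar> \<le> 1"
    by linarith
  moreover have "(\<Sum>i<k. \<bar>?D (s + i * Q)\<bar>) = \<bar>\<Sum>i<k. ?D (s + i * Q)\<bar>"
    using window_count_deviations_same_sign
  proof
    assume "\<forall>s. P \<le> int (letter_count x b s Q)"
    then show ?thesis
      by (simp add: sum_nonneg)
  next
    assume "\<forall>s. int (letter_count x b s Q) \<le> P"
    then have nonpos: "\<forall>i. ?D (s + i * Q) \<le> 0"
      by simp
    then have "(\<Sum>i<k. \<bar>?D (s + i * Q)\<bar>) = - (\<Sum>i<k. ?D (s + i * Q))"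
      by (simp add: abs_of_nonpos sum_negf[symmetric])
    also have "\<dots> = \<bar>\<Sum>i<k. ?D (s + i * Q)\<bar>"
      using nonpos by (simp add: abs_of_nonpos sum_nonpos)
    finally show ?thesis .
  qed
  ultimately show ?thesis
    by simp
qed

end

lemma rational_frequency_imp_eventually_periodic:
  assumes letters: "\<forall>s. x s = a \<or> x s = b" and bal: "balanced x b"
    and freq: "\<forall>p n. \<bar>real (letter_count x b p n) - real n * \<alpha>\<bar> \<le> 1" and "\<alpha> \<in> \<rat>"
  shows "eventually_periodic x"
proof -
  obtain P Q' :: int where "0 < Q'" "\<alpha> = of_int P / of_int Q'"
    using \<open>\<alpha> \<in> \<rat>\<close> by (auto elim: Rats_cases')
  define Q where "Q = nat Q'"
  have Q: "0 < Q" "real Q * \<alpha> = of_int P"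
    using \<open>0 < Q'\<close> \<open>\<alpha> = of_int P / of_int Q'\<close> by (simp_all add: Q_def)
  let ?D = "\<lambda>s. int (letter_count x b s Q) - P"
  have "finite {s. ?D s \<noteq> 0}"
    by (rule finite_support_if_progression_sums_le_1[OF Q(1)])
      (rule window_count_deviations_along_progression[OF bal freq Q(2)])
  then obtain N where "\<forall>s\<in>{s. ?D s \<noteq> 0}. s < N"
    using finite_nat_set_iff_bounded by blast
  then have "int (letter_count x b s Q) = P" if "s \<ge> N" for s
    using that by (meson eq_iff_diff_eq_0 leD mem_Collect_eq)
  then have "\<forall>s\<ge>N. letter_count x b s Q = letter_count x b (Suc s) Q"
    by (metis le_SucI of_nat_eq_iff)
  then show ?thesis
    by (rule eventually_periodic_if_letter_count_stable[OF letters Q(1)])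
qed

lemma oscillation_le_1_imp_band:
  fixes g :: "nat \<Rightarrow> real"
  assumes osc: "\<And>s s'. \<bar>g s - g s'\<bar> \<le> 1"
  shows "\<exists>L. \<forall>s. L \<le> g s \<and> g s \<le> L + 1"
proof -
  have bdd: "bdd_below (range g)"
  proof (rule bdd_belowI2)
    fix s
    show "g 0 - 1 \<le> g s"
      using osc[of 0 s] by (simp add: abs_le_iff)
  qed
  have "Inf (range g) \<le> g s" for s
    using bdd by (intro cInf_lower) auto
  moreover have "g s - 1 \<le> Inf (range g)" for s
  proof (rule cInf_greatest)
    fix y
    assume "y \<in> range g"
    then obtain s' where "y = g s'"
      by blast
    then show "g s - 1 \<le> y"
      using osc[of s s'] by (simp add: abs_le_iff)
  qed simp
  ultimately show ?thesis
    by (intro exI[of _ "Inf (range g)"]) (auto simp: algebra_simps)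
qed

definition discrepancy :: "(nat \<Rightarrow> 'a) \<Rightarrow> 'a \<Rightarrow> real \<Rightarrow> nat \<Rightarrow> real" where
  "discrepancy x c \<alpha> s = real (letter_count x c 0 s) - real s * \<alpha>"

lemma letter_count_eq_discrepancy_diff:
  "real (letter_count x c s d) = discrepancy x c \<alpha> (s + d) - discrepancy x c \<alpha> s + real d * \<alpha>"
  using letter_count_add[of x c 0 s d] by (simp add: discrepancy_def algebra_simps)

lemma discrepancy_band:
  assumes freq: "\<forall>p n. \<bar>real (letter_count x c p n) - real n * \<alpha>\<bar> \<le> 1"
  shows "\<exists>L. \<forall>s. L \<le> discrepancy x c \<alpha> s \<and> discrepancy x c \<alpha> s \<le> L + 1"
proof (rule oscillation_le_1_imp_band)
  have "discrepancy x c \<alpha> (s + d) - discrepancy x c \<alpha> s = real (letter_count x c s d) - real d * \<alpha>"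
    for s d
    using letter_count_eq_discrepancy_diff[of x c s d \<alpha>] by simp
  then have step: "\<bar>discrepancy x c \<alpha> (s + d) - discrepancy x c \<alpha> s\<bar> \<le> 1" for s d
    using freq by metis
  show "\<bar>discrepancy x c \<alpha> s - discrepancy x c \<alpha> s'\<bar> \<le> 1" for s s'
  proof (cases "s \<le> s'")
    case True
    then show ?thesis
      using step[of s "s' - s"] by (simp add: abs_minus_commute)
  next
    case False
    then show ?thesis
      using step[of s' "s - s'"] by simp
  qed
qed

section \<open>Uniform density of fractional parts\<close>

lemma frac_eq_self: "0 \<le> y \<Longrightarrow> y \<le> 1 \<Longrightarrow> 0 < frac y \<Longrightarrow> frac y = (y::real)"
  by (cases "y = 1") (auto simp: frac_eq)

lemma frac_of_nat_mult:
  assumes "real e * frac y < 1"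
  shows "frac (real e * y) = real e * frac y"
proof -
  have "real e * y - real e * frac y = of_int (int e * \<lfloor>y\<rfloor>)"
    by (simp add: frac_def algebra_simps)
  then show ?thesis
    using assms by (simp add: frac_unique_iff)
qed

lemma frac_steps_hit_interval:
  fixes y \<delta> \<epsilon> u :: real
  assumes y: "0 \<le> y" "y < 1" and \<delta>: "0 < \<delta>" "\<delta> < \<epsilon>" and u: "0 \<le> u" "u + \<epsilon> \<le> 1"
  shows "\<exists>j \<le> nat \<lceil>1 / \<delta>\<rceil> + 1. u < frac (y + real j * \<delta>) \<and> frac (y + real j * \<delta>) < u + \<epsilon>"
proof -
  define T where "T = (if y \<le> u then u else u + 1)"
  have T: "0 \<le> T - y" "T - y \<le> 1"
    using y u \<delta> by (auto simp: T_def)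
  define j where "j = nat \<lfloor>(T - y) / \<delta>\<rfloor> + 1"
  have j: "(T - y) / \<delta> < real j" "real j \<le> (T - y) / \<delta> + 1"
    using T \<delta> by (simp_all add: j_def) linarith+
  then have hit: "T < y + real j * \<delta>" "y + real j * \<delta> \<le> T + \<delta>"
    using \<delta> by (simp_all add: field_simps)
  have "(T - y) / \<delta> \<le> 1 / \<delta>"
    using T \<delta> by (simp add: divide_right_mono)
  then have "\<lfloor>(T - y) / \<delta>\<rfloor> \<le> \<lceil>1 / \<delta>\<rceil>"
    using floor_le_ceiling[of "1 / \<delta>"] floor_mono by (meson order_trans)
  then have "j \<le> nat \<lceil>1 / \<delta>\<rceil> + 1"
    using T \<delta> by (simp add: j_def nat_mono)
  moreover have "u < frac (y + real j * \<delta>) \<and> frac (y + real j * \<delta>) < u + \<epsilon>"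
  proof (cases "y \<le> u")
    case True
    then show ?thesis
      using hit \<delta> u y by (auto simp: T_def frac_eq)
  next
    case False
    then have "frac (y + real j * \<delta>) = y + real j * \<delta> - 1"
      using hit \<delta> u by (subst frac_unique_iff) (auto simp: T_def)
    then show ?thesis
      using hit \<delta> False by (simp add: T_def)
  qed
  ultimately show ?thesis
    by blast
qed

text \<open>Kronecker's theorem gives a multiple \<open>q \<theta>\<close> whose fractional part \<open>\<delta>\<close> is smaller than
  \<open>\<epsilon>\<close>; stepping by \<open>q \<theta>\<close> then reaches every interval of length \<open>\<epsilon>\<close> within a number of
  steps that does not depend on the starting point \<open>c\<close>.\<close>

lemma uniform_density_frac_mult:
  fixes \<theta> \<epsilon> :: real
  assumes irrational: "\<theta> \<notin> \<rat>" and \<epsilon>: "0 < \<epsilon>" "\<epsilon> \<le> 1"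
  shows "\<exists>M. \<forall>c u. 0 \<le> u \<longrightarrow> u + \<epsilon> \<le> 1 \<longrightarrow>
           (\<exists>t\<le>M. u < frac (c + real t * \<theta>) \<and> frac (c + real t * \<theta>) < u + \<epsilon>)"
proof -
  obtain q where q: "0 < q" "\<bar>frac (real q * \<theta>) - \<epsilon> / 2\<bar> < \<epsilon> / 2"
    using Kronecker_approx_1_explicit[OF irrational, of "\<epsilon> / 2" "\<epsilon> / 2"] \<epsilon> by auto
  define \<delta> where "\<delta> = frac (real q * \<theta>)"
  have \<delta>: "0 < \<delta>" "\<delta> < \<epsilon>"
    using q(2) unfolding \<delta>_def abs_less_iff by linarith+
  have "\<exists>t \<le> q * (nat \<lceil>1 / \<delta>\<rceil> + 1). u < frac (c + real t * \<theta>) \<and> frac (c + real t * \<theta>) < u + \<epsilon>"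
    if "0 \<le> u" "u + \<epsilon> \<le> 1" for c u
  proof -
    have "\<exists>j \<le> nat \<lceil>1 / \<delta>\<rceil> + 1. u < frac (c + real j * \<delta>) \<and> frac (c + real j * \<delta>) < u + \<epsilon>"
      using frac_steps_hit_interval[of "frac c" \<delta> \<epsilon> u] \<delta> that frac_lt_1[of c] by simp
    then obtain j where j: "j \<le> nat \<lceil>1 / \<delta>\<rceil> + 1"
      "u < frac (c + real j * \<delta>)" "frac (c + real j * \<delta>) < u + \<epsilon>"
      by blast
    have "c + real (j * q) * \<theta> = (c + real j * \<delta>) + of_int (int j * \<lfloor>real q * \<theta>\<rfloor>)"
      by (simp add: \<delta>_def frac_def algebra_simps)
    then have "frac (c + real (j * q) * \<theta>) = frac (c + real j * \<delta>)"
      by (simp only: frac_add_of_int_right)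
    moreover have "j * q \<le> q * (nat \<lceil>1 / \<delta>\<rceil> + 1)"
      using mult_le_mono1[OF j(1), of q] by (simp add: mult.commute)
    ultimately show ?thesis
      using j by metis
  qed
  then show ?thesis
    by blast
qed

section \<open>Anti-powers in words with irrational frequency\<close>

lemma anti_power_factor_if_blocks_distinct:
  assumes "1 \<le> m"
    and distinct: "\<And>i i'. i < i' \<Longrightarrow> i' < k \<Longrightarrow> factor x (j + i * m) m \<noteq> factor x (j + i' * m) m"
  shows "anti_power k (factor x j (k * m))"
proof -
  have block: "take m (drop (i * m) (factor x j (k * m))) = factor x (j + i * m) m" if "i < k" for i
  proof -
    have "1 * m \<le> (k - i) * m"
      using that by (intro mult_right_mono) auto
    then have "m \<le> k * m - i * m"
      by (simp add: diff_mult_distrib)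
    then show ?thesis
      by (simp add: drop_factor take_factor)
  qed
  show ?thesis
    unfolding anti_power_def
    using assms block by (metis length_factor linorder_neqE_nat)
qed

lemma letter_count_stable_if_factor_shift_eq:
  assumes eq: "factor x p m = factor x (p + d) m" and "i \<le> m"
  shows "letter_count x c (p + i) d = letter_count x c p d"
  using \<open>i \<le> m\<close>
proof (induction i)
  case (Suc i)
  have "x (p + i) = x (p + i + d)"
    using eq Suc.prems by (auto simp: factor_eq_iff add.commute add.left_commute)
  then show ?case
    using letter_count_Suc_shift[of x c "p + i" d] Suc by simp
qed simp

lemma spread_of_small_multiples:
  fixes \<gamma> :: real
  assumes \<gamma>: "1 / (2 * real k) < \<gamma>" "\<gamma> < 3 / (4 * real k)" and e: "1 \<le> e" "e < k"
  shows "1 / (4 * real k) < real e * \<gamma>" and "real e * \<gamma> < 1 - 1 / (4 * real k)"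
proof -
  have bounds: "2 \<le> real k" "1 \<le> real e" "real e \<le> real k - 1"
    using e by auto
  have "1 / (4 * real k) < \<gamma>"
    using \<gamma> bounds by (simp add: field_simps)
  also have "\<gamma> \<le> real e * \<gamma>"
    using bounds \<gamma> by (simp add: mult_le_cancel_right1)
  finally show "1 / (4 * real k) < real e * \<gamma>" .
  have "real e * \<gamma> \<le> (real k - 1) * \<gamma>"
    using bounds \<gamma> by (intro mult_right_mono) auto
  also have "\<dots> < (real k - 1) * (3 / (4 * real k))"
    using \<gamma> bounds by (intro mult_strict_left_mono) auto
  also have "\<dots> \<le> 1 - 1 / (4 * real k)"
    using bounds by (simp add: field_simps)
  finally show "real e * \<gamma> < 1 - 1 / (4 * real k)" .
qed

text \<open>Taking \<open>frac (m \<alpha>) \<in> (1/(2k), 3/(4k))\<close> keeps \<open>frac (e m \<alpha>) = e frac (m \<alpha>)\<close> inside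
  \<open>(1/(4k), 1 - 1/(4k))\<close> for \<open>0 < e < k\<close>.\<close>

lemma block_length_with_spread_multiples:
  assumes irrational: "\<alpha> \<notin> \<rat>" and "1 < k"
  obtains m where "M \<le> m" "0 < m" "\<forall>e. 1 \<le> e \<longrightarrow> e < k \<longrightarrow>
      1 / (4 * real k) < frac (real (e * m) * \<alpha>) \<and> frac (real (e * m) * \<alpha>) < 1 - 1 / (4 * real k)"
proof -
  define \<epsilon> :: real where "\<epsilon> = 1 / (4 * real k)"
  have k: "2 \<le> real k"
    using \<open>1 < k\<close> by simp
  obtain M' where M': "\<forall>c u. 0 \<le> u \<longrightarrow> u + \<epsilon> \<le> 1 \<longrightarrow>
           (\<exists>t\<le>M'. u < frac (c + real t * \<alpha>) \<and> frac (c + real t * \<alpha>) < u + \<epsilon>)"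
    using uniform_density_frac_mult[OF irrational, of \<epsilon>] k by (auto simp: \<epsilon>_def)
  have "0 \<le> 1 / (2 * real k)" "1 / (2 * real k) + \<epsilon> \<le> 1"
    using k by (auto simp: \<epsilon>_def field_simps)
  then obtain t where t: "1 / (2 * real k) < frac (real M * \<alpha> + real t * \<alpha>)"
    "frac (real M * \<alpha> + real t * \<alpha>) < 1 / (2 * real k) + \<epsilon>"
    using M'[rule_format, of "1 / (2 * real k)" "real M * \<alpha>"] by blast
  define m where "m = M + t"
  define \<gamma> where "\<gamma> = frac (real m * \<alpha>)"
  have \<gamma>: "1 / (2 * real k) < \<gamma>" "\<gamma> < 3 / (4 * real k)"
    using t k by (simp_all add: \<gamma>_def m_def distrib_right \<epsilon>_def field_simps)
  have "0 < m"
    using \<gamma> k by (cases m) (auto simp: \<gamma>_def)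
  have "1 / (4 * real k) < frac (real (e * m) * \<alpha>) \<and> frac (real (e * m) * \<alpha>) < 1 - 1 / (4 * real k)"
    if "1 \<le> e" "e < k" for e
  proof -
    note spread = spread_of_small_multiples[OF \<gamma> that]
    have "0 < 1 / (4 * real k)"
      using k by simp
    then have "real e * \<gamma> < 1"
      using spread(2) by linarith
    then have "frac (real (e * m) * \<alpha>) = real e * \<gamma>"
      using frac_of_nat_mult[of e "real m * \<alpha>"] by (simp add: \<gamma>_def mult.assoc)
    then show ?thesis
      using spread by simp
  qed
  then show thesis
    using that[of m] \<open>0 < m\<close> by (simp add: m_def)
qed

context
  fixes x :: "nat \<Rightarrow> 'a" and b :: 'a and \<alpha> L :: real
  assumes irrational: "\<alpha> \<notin> \<rat>"
    and band: "\<forall>s. L \<le> discrepancy x b \<alpha> s \<and> discrepancy x b \<alpha> s \<le> L + 1"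
begin

text \<open>With \<open>g s = discrepancy x b \<alpha> s - L \<in> [0, 1]\<close> we have
  \<open>letter_count x b s d = \<lfloor>d \<alpha>\<rfloor> + frac (d \<alpha>) - g s + g (s + d)\<close>, so the count is decided
  by the position of \<open>g s\<close> relative to \<open>frac (d \<alpha>)\<close>.\<close>

lemma letter_count_gt_floor:
  assumes "discrepancy x b \<alpha> s - L < frac (real d * \<alpha>)"
  shows "\<lfloor>real d * \<alpha>\<rfloor> < int (letter_count x b s d)"
proof -
  have "real_of_int \<lfloor>real d * \<alpha>\<rfloor> < real (letter_count x b s d)"
    using assms letter_count_eq_discrepancy_diff[of x b s d \<alpha>] band[rule_format, of "s + d"]
    unfolding frac_def by linarith
  then show ?thesis
    by linarith
qed

lemma letter_count_le_floor:
  assumes "frac (real d * \<alpha>) < discrepancy x b \<alpha> s - L"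
  shows "int (letter_count x b s d) \<le> \<lfloor>real d * \<alpha>\<rfloor>"
proof -
  have "real (letter_count x b s d) < real_of_int \<lfloor>real d * \<alpha>\<rfloor> + 1"
    using assms letter_count_eq_discrepancy_diff[of x b s d \<alpha>] band[rule_format, of "s + d"]
    unfolding frac_def by linarith
  then show ?thesis
    by linarith
qed

text \<open>Stepping from \<open>P\<close> to \<open>P + t\<close> moves \<open>g\<close> by \<open>- t \<alpha>\<close> modulo \<open>1\<close>, so by uniform density
  both cases occur within a bounded distance of every position.\<close>

lemma window_counts_vary:
  assumes \<epsilon>: "0 < \<epsilon>" "\<epsilon> \<le> 1"
  shows "\<exists>M. \<forall>d P. \<epsilon> < frac (real d * \<alpha>) \<longrightarrow> frac (real d * \<alpha>) < 1 - \<epsilon> \<longrightarrow>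
           (\<exists>t1\<le>M. \<exists>t2\<le>M. letter_count x b (P + t1) d \<noteq> letter_count x b (P + t2) d)"
proof -
  have "- \<alpha> \<notin> \<rat>"
    using irrational by (simp add: Rats_minus_iff)
  then obtain M where M: "\<forall>c u. 0 \<le> u \<longrightarrow> u + \<epsilon> \<le> 1 \<longrightarrow>
           (\<exists>t\<le>M. u < frac (c + real t * - \<alpha>) \<and> frac (c + real t * - \<alpha>) < u + \<epsilon>)"
    using uniform_density_frac_mult \<epsilon> by blast
  define g where "g s = discrepancy x b \<alpha> s - L" for s
  have g: "0 \<le> g s" "g s \<le> 1" for s
    using band[rule_format, of s] unfolding g_def by linarith+
  have frac_g: "frac (g (P + t)) = frac (g P + real t * - \<alpha>)" for P t
  proof -
    have "g (P + t) = (g P + real t * - \<alpha>) + of_int (int (letter_count x b P t))"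
      using letter_count_eq_discrepancy_diff[of x b P t \<alpha>] by (simp add: g_def)
    then show ?thesis
      by (simp only: frac_add_of_int_right)
  qed
  have "\<exists>t1\<le>M. \<exists>t2\<le>M. letter_count x b (P + t1) d \<noteq> letter_count x b (P + t2) d"
    if \<beta>: "\<epsilon> < frac (real d * \<alpha>)" "frac (real d * \<alpha>) < 1 - \<epsilon>" for d P
  proof -
    obtain t1 where t1: "t1 \<le> M" "0 < frac (g (P + t1))" "frac (g (P + t1)) < \<epsilon>"
      using M[rule_format, of 0 "g P"] \<epsilon> frac_g by auto
    obtain t2 where t2: "t2 \<le> M" "1 - \<epsilon> < frac (g (P + t2))"
      using M[rule_format, of "1 - \<epsilon>" "g P"] \<epsilon> frac_g by auto
    have "frac (g (P + t1)) = g (P + t1)"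
      using frac_eq_self g t1(2) by blast
    then have "\<lfloor>real d * \<alpha>\<rfloor> < int (letter_count x b (P + t1) d)"
      using letter_count_gt_floor t1(3) \<beta>(1) by (simp add: g_def)
    moreover have "frac (g (P + t2)) = g (P + t2)"
      using frac_eq_self g t2(2) \<epsilon>(2) by (metis diff_ge_0_iff_ge le_less_trans)
    then have "int (letter_count x b (P + t2) d) \<le> \<lfloor>real d * \<alpha>\<rfloor>"
      using letter_count_le_floor t2(2) \<beta>(2) by (simp add: g_def)
    ultimately have "letter_count x b (P + t1) d \<noteq> letter_count x b (P + t2) d"
      by linarith
    then show ?thesis
      using t1(1) t2(1) by blast
  qed
  then show ?thesis
    by blast
qed

lemma anti_power_at_every_position:
  assumes "1 < k"
  shows "\<exists>n. anti_power k (factor x j n)"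
proof -
  define \<epsilon> :: real where "\<epsilon> = 1 / (4 * real k)"
  have \<epsilon>: "0 < \<epsilon>" "\<epsilon> \<le> 1"
    using assms by (auto simp: \<epsilon>_def)
  obtain M where M: "\<forall>d P. \<epsilon> < frac (real d * \<alpha>) \<longrightarrow> frac (real d * \<alpha>) < 1 - \<epsilon> \<longrightarrow>
           (\<exists>t1\<le>M. \<exists>t2\<le>M. letter_count x b (P + t1) d \<noteq> letter_count x b (P + t2) d)"
    using window_counts_vary[OF \<epsilon>] by blast
  obtain m where "M \<le> m" "0 < m" and spread: "\<forall>e. 1 \<le> e \<longrightarrow> e < k \<longrightarrow>
      \<epsilon> < frac (real (e * m) * \<alpha>) \<and> frac (real (e * m) * \<alpha>) < 1 - \<epsilon>"
    using block_length_with_spread_multiples[OF irrational assms] unfolding \<epsilon>_def by blast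
  have "factor x (j + i * m) m \<noteq> factor x (j + i' * m) m" if "i < i'" "i' < k" for i i'
  proof
    assume eq: "factor x (j + i * m) m = factor x (j + i' * m) m"
    have "j + i' * m = (j + i * m) + (i' - i) * m"
      using that by (simp add: diff_mult_distrib)
    then have shifted: "factor x (j + i * m) m = factor x (j + i * m + (i' - i) * m) m"
      using eq by (simp add: add.assoc)
    have stable: "letter_count x b (j + i * m + s) ((i' - i) * m)
        = letter_count x b (j + i * m) ((i' - i) * m)" if "s \<le> m" for s
      by (rule letter_count_stable_if_factor_shift_eq[OF shifted that])
    have "\<epsilon> < frac (real ((i' - i) * m) * \<alpha>)" "frac (real ((i' - i) * m) * \<alpha>) < 1 - \<epsilon>"
      using spread[rule_format, of "i' - i"] that by auto
    then obtain t1 t2 where "t1 \<le> M" "t2 \<le> M"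
      "letter_count x b (j + i * m + t1) ((i' - i) * m) \<noteq> letter_count x b (j + i * m + t2) ((i' - i) * m)"
      using M[rule_format, of "(i' - i) * m" "j + i * m"] by blast
    then show False
      using stable \<open>M \<le> m\<close> by (metis order_trans)
  qed
  then have "anti_power k (factor x j (k * m))"
    using \<open>0 < m\<close> by (intro anti_power_factor_if_blocks_distinct) auto
  then show ?thesis
    by blast
qed

end

theorem corollary4p12:
  fixes x :: "nat \<Rightarrow> 'a" and k j :: nat
  assumes "sturmian x" and "k > 1"
  shows "\<exists>n. anti_power k (factor x j n)"
proof -
  interpret sturmian_word x
    using assms(1) by unfold_locales
  obtain a b where ab: "a \<noteq> b" and letters: "\<forall>s. x s = a \<or> x s = b"
    using binary_alphabet by blast
  have bal: "balanced x b"
    using balanced_letter[OF ab letters] .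
  obtain \<alpha> where freq: "\<forall>p n. \<bar>real (letter_count x b p n) - real n * \<alpha>\<bar> \<le> 1"
    using balanced_frequency[OF bal] by blast
  have irrational: "\<alpha> \<notin> \<rat>"
    using rational_frequency_imp_eventually_periodic[OF letters bal freq] not_eventually_periodic
    by blast
  obtain L where band: "\<forall>s. L \<le> discrepancy x b \<alpha> s \<and> discrepancy x b \<alpha> s \<le> L + 1"
    using discrepancy_band[OF freq] by blast
  show ?thesis
    using anti_power_at_every_position[OF irrational band assms(2)] .
qed

end
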